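(* Under the hypotheses and notation of the context, assume moreover that $v$ is meromorphic in the unit disk. Then for every $n\ge2$ with $\phi_n(0)\ne0$ and $\phi_{n-1}(0)\ne0$, $$B_n(z)+B_{n-1}(z)-\frac{\kappa_{n-1}}{\kappa_{n-2}}\frac{A_{n-1}(z)}{z}-\frac{\kappa_n}{\kappa_{n-2}}\frac{\phi_{n-1}(0)}{\phi_n(0)}A_{n-1}(z)=-\frac{n-1}{z}-v'(z).$$
   Context: Let $w$ be a positive weight function on the unit circle normalized by $\int_{|\zeta|=1}w(\zeta)\frac{d\zeta}{i\zeta}=1$ (contour integrals counterclockwise), with orthonormal polynomials $\phi_n(z)=\kappa_nz^n+\cdots$, $\kappa_n>0$, $\int_{|\zeta|=1}\phi_m\overline{\phi_n}w\frac{d\zeta}{i\zeta}=\delta_{m,n}$. For $f(z)=\sum_{k=0}^na_kz^k$ of degree $n$, $f^*(z)=\sum_{k=0}^n\overline{a_k}z^{n-k}$. Let $v=-\log w$ and assume $w$ is differentiable in a neighborhood of the unit circle, has moments of all integral orders, and that $\int_{|\zeta|=1}\frac{v'(z)-v'(\zeta)}{z-\zeta}\zeta^mw(\zeta)\frac{d\zeta}{i\zeta}$ exists for all integers $m$. For $k\ge1$ with $\phi_k(0)\ne0$ define $$A_k(z)=k\frac{\kappa_{k-1}}{\kappa_k}+i\frac{\kappa_{k-1}}{\phi_k(0)}z\int_{|\zeta|=1}\frac{v'(z)-v'(\zeta)}{z-\zeta}\phi_k(\zeta)\overline{\phi_k^*(\zeta)}w(\zeta)\,d\zeta,$$ $$B_k(z)=-i\int_{|\zeta|=1}\frac{v'(z)-v'(\zeta)}{z-\zeta}\phi_k(\zeta)\Big[\overline{\phi_k(\zeta)}-\frac{\kappa_k}{\phi_k(0)}\overline{\phi_k^*(\zeta)}\Big]w(\zeta)\,d\zeta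 ,$$ and set $A_0=B_0=0$. *)

theory Defs
  imports "HOL-Complex_Analysis.Complex_Analysis" "HOL-Computational_Algebra.Polynomial"
begin

definition opuc_star :: "complex poly \<Rightarrow> complex \<Rightarrow> complex" where
  "opuc_star p z = (\<Sum>k\<le>degree p. cnj (coeff p k) * z ^ (degree p - k))"

abbreviation kap :: "(nat \<Rightarrow> complex poly) \<Rightarrow> nat \<Rightarrow> complex" where
  "kap \<phi> k \<equiv> lead_coeff (\<phi> k)"

text \<open>A_k(z); dv stands for v'. The integral is over the counterclockwise unit circle.\<close>
definition A_fun :: "(complex \<Rightarrow> complex) \<Rightarrow> (complex \<Rightarrow> complex) \<Rightarrow> (nat \<Rightarrow> complex poly)
    \<Rightarrow> nat \<Rightarrow> complex \<Rightarrow> complex" where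
  "A_fun w dv \<phi> k z =
    (if k = 0 then 0 else
      of_nat k * kap \<phi> (k - 1) / kap \<phi> k
      + \<i> * kap \<phi> (k - 1) / poly (\<phi> k) 0 * z *
        contour_integral (circlepath 0 1)
          (\<lambda>\<zeta>. (dv z - dv \<zeta>) / (z - \<zeta>) * poly (\<phi> k) \<zeta> * cnj (opuc_star (\<phi> k) \<zeta>) * w \<zeta>))"

definition B_fun :: "(complex \<Rightarrow> complex) \<Rightarrow> (complex \<Rightarrow> complex) \<Rightarrow> (nat \<Rightarrow> complex poly)
    \<Rightarrow> nat \<Rightarrow> complex \<Rightarrow> complex" where
  "B_fun w dv \<phi> k z =
    (if k = 0 then 0 else
      - \<i> * contour_integral (circlepath 0 1)
          (\<lambda>\<zeta>. (dv z - dv \<zeta>) / (z - \<zeta>) * poly (\<phi> k) \<zeta> *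
               (cnj (poly (\<phi> k) \<zeta>) - kap \<phi> k / poly (\<phi> k) 0 * cnj (opuc_star (\<phi> k) \<zeta>)) * w \<zeta>))"

end

theory Submission
  imports Defs
begin

text \<open>
  On the unit circle \<open>\<phi>\<^sub>k\<^sup>*(\<zeta>) = \<zeta>\<^sup>k conj \<phi>\<^sub>k(\<zeta>)\<close>. Put \<open>m = n - 1\<close> and
  \<open>c = \<kappa>\<^sub>n / \<phi>\<^sub>n(0)\<close>. Szego's recurrence \<open>\<kappa>\<^sub>m \<phi>\<^sub>n = \<kappa>\<^sub>n z \<phi>\<^sub>m + \<phi>\<^sub>n(0) \<phi>\<^sub>m\<^sup>*\<close>
  together with \<open>\<kappa>\<^sub>n\<^sup>2 - |\<phi>\<^sub>n(0)|\<^sup>2 = \<kappa>\<^sub>m\<^sup>2\<close> shows that the integrands of \<open>B\<^sub>n\<close>, \<open>B\<^sub>m\<close>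
  and \<open>A\<^sub>m\<close> combine pointwise on the circle to \<open>c (z - \<zeta>) \<phi>\<^sub>m(\<zeta>)\<^sup>2 / \<zeta>\<^sup>m\<close>, which cancels
  the denominator of the kernel \<open>(v'(z) - v'(\<zeta>)) / (z - \<zeta>)\<close>. The \<open>v'(z)\<close> part is then
  an inner product of \<open>z \<phi>\<^sub>m\<close> with \<open>\<phi>\<^sub>m\<^sup>*\<close>, evaluated by orthogonality. Since
  \<open>w' = - v' w\<close>, integration by parts turns the \<open>v'(\<zeta>)\<close> part into the integral of
  \<open>(\<phi>\<^sub>m\<^sup>2 / \<zeta>\<^sup>m)' w\<close>, which orthogonality evaluates as well.
\<close>

section \<open>Reversed polynomials on the unit circle\<close>

lemma sphere_mult_cnj: "\<zeta> \<in> sphere 0 1 \<Longrightarrow> \<zeta> * cnj \<zeta> = 1"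
  by (metis complex_norm_square dist_0_norm mem_sphere mult.commute of_real_1 one_power2)

lemma sphere_power_mult_cnj: "\<zeta> \<in> sphere 0 1 \<Longrightarrow> \<zeta> ^ m * cnj \<zeta> ^ m = 1"
  by (metis power_mult_distrib power_one sphere_mult_cnj)

lemma cnj_power_on_circle: "\<zeta> \<in> sphere 0 1 \<Longrightarrow> cnj \<zeta> ^ m = 1 / \<zeta> ^ m"
  using sphere_power_mult_cnj[of \<zeta> m] by (auto simp: eq_divide_eq mult.commute)

lemma degree_le_if_coeff_Suc_eq_0:
  assumes "degree p \<le> Suc k" "coeff p (Suc k) = 0"
  shows "degree p \<le> k"
  using assms by (intro degree_le) (metis Suc_le_eq coeff_eq_0 le_less le_trans)

text \<open>The reversal \<open>p\<^sup>*\<close> relative to a degree bound \<open>m\<close> instead of \<open>degree p\<close>, so that it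
  also applies to polynomials of lower degree such as \<open>z \<phi>\<^sub>j\<close>, \<open>j < m\<close>.\<close>
definition poly_star :: "nat \<Rightarrow> complex poly \<Rightarrow> complex poly" where
  "poly_star m p = (\<Sum>k\<le>m. monom (cnj (coeff p k)) (m - k))"

lemma poly_poly_star: "poly (poly_star m p) x = (\<Sum>k\<le>m. cnj (coeff p k) * x ^ (m - k))"
  by (simp add: poly_star_def poly_sum poly_monom)

lemma opuc_star_eq_poly_star: "opuc_star p = poly (poly_star (degree p) p)"
  by (simp add: fun_eq_iff opuc_star_def poly_poly_star)

lemma degree_poly_star_le: "degree (poly_star m p) \<le> m"
  unfolding poly_star_def by (rule degree_sum_le) (auto intro: order.trans[OF degree_monom_le])

lemma coeff_poly_star: "j \<le> m \<Longrightarrow> coeff (poly_star m p) j = cnj (coeff p (m - j))"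
proof -
  assume j: "j \<le> m"
  have "coeff (poly_star m p) j = (\<Sum>k\<le>m. if m - k = j then cnj (coeff p k) else 0)"
    by (simp add: poly_star_def coeff_sum)
  also have "\<dots> = (\<Sum>k\<in>{m - j}. cnj (coeff p k))"
    by (rule sum.mono_neutral_cong_right) (use j in auto)
  finally show ?thesis by simp
qed

lemma degree_poly_star_less:
  assumes "coeff p 0 = 0" and "0 < m"
  shows "degree (poly_star m p) < m"
proof (rule degree_lessI)
  show "\<forall>k\<ge>m. coeff (poly_star m p) k = 0"
    using assms degree_poly_star_le[of m p] by (auto simp: le_less coeff_poly_star coeff_eq_0)
qed (use assms in simp)

lemma poly_star_0 [simp]: "poly (poly_star m p) 0 = cnj (coeff p m)"
  by (simp add: poly_0_coeff_0 coeff_poly_star)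

lemma poly_star_on_circle:
  assumes \<zeta>: "\<zeta> \<in> sphere 0 1" and p: "degree p \<le> m"
  shows "poly (poly_star m p) \<zeta> = \<zeta> ^ m * cnj (poly p \<zeta>)"
proof -
  have "cnj (poly p \<zeta>) = (\<Sum>k\<le>degree p. cnj (coeff p k) * cnj \<zeta> ^ k)"
    by (simp add: poly_altdef[of p])
  also have "\<dots> = (\<Sum>k\<le>m. cnj (coeff p k) * cnj \<zeta> ^ k)"
    by (rule sum.mono_neutral_left) (use p in \<open>auto simp: coeff_eq_0\<close>)
  finally have "\<zeta> ^ m * cnj (poly p \<zeta>) = (\<Sum>k\<le>m. cnj (coeff p k) * (\<zeta> ^ m * cnj \<zeta> ^ k))"
    by (simp add: sum_distrib_left mult_ac)
  also have "\<dots> = (\<Sum>k\<le>m. cnj (coeff p k) * (\<zeta> ^ (m - k) * (\<zeta> ^ k * cnj \<zeta> ^ k)))"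
    by (intro sum.cong refl) (simp add: mult.assoc flip: power_add)
  also have "\<dots> = poly (poly_star m p) \<zeta>"
    by (simp add: sphere_power_mult_cnj[OF \<zeta>] poly_poly_star)
  finally show ?thesis ..
qed

lemma cnj_poly_star_on_circle:
  "\<zeta> \<in> sphere 0 1 \<Longrightarrow> degree p \<le> m \<Longrightarrow> cnj (poly (poly_star m p) \<zeta>) = cnj \<zeta> ^ m * poly p \<zeta>"
  by (simp add: poly_star_on_circle)

lemma contour_integral_by_parts_closed_path:
  assumes g: "valid_path g" "pathfinish g = pathstart g"
    and f: "\<And>\<zeta>. \<zeta> \<in> path_image g \<Longrightarrow> (f has_field_derivative f' \<zeta>) (at \<zeta>)"
    and h: "\<And>\<zeta>. \<zeta> \<in> path_image g \<Longrightarrow> (h has_field_derivative h' \<zeta>) (at \<zeta>)"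
    and integrable: "(\<lambda>\<zeta>. f' \<zeta> * h \<zeta>) contour_integrable_on g"
  shows "contour_integral g (\<lambda>\<zeta>. f \<zeta> * h' \<zeta>) = - contour_integral g (\<lambda>\<zeta>. f' \<zeta> * h \<zeta>)"
proof -
  have "((\<lambda>\<zeta>. f' \<zeta> * h \<zeta> + f \<zeta> * h' \<zeta>) has_contour_integral 0) g"
  proof (rule Cauchy_theorem_primitive[of "path_image g" "\<lambda>\<zeta>. f \<zeta> * h \<zeta>"])
    fix \<zeta> assume "\<zeta> \<in> path_image g"
    from DERIV_mult[OF f[OF this] h[OF this]]
    show "((\<lambda>\<zeta>. f \<zeta> * h \<zeta>) has_field_derivative f' \<zeta> * h \<zeta> + f \<zeta> * h' \<zeta>) (at \<zeta> within path_image g)"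
      by (simp add: has_field_derivative_at_within mult.commute)
  qed (use g in auto)
  from has_contour_integral_diff[OF this has_contour_integral_integral[OF integrable]]
  show ?thesis
    by (simp add: contour_integral_unique)
qed

lemma has_field_derivative_exp_neg:
  assumes "open S" and "v holomorphic_on S" and "\<And>\<zeta>. \<zeta> \<in> S \<Longrightarrow> w \<zeta> = exp (- v \<zeta>)"
    and "\<zeta> \<in> S"
  shows "(w has_field_derivative - deriv v \<zeta> * w \<zeta>) (at \<zeta>)"
proof -
  have "((\<lambda>\<zeta>. exp (- v \<zeta>)) has_field_derivative exp (- v \<zeta>) * - deriv v \<zeta>) (at \<zeta>)"
    using holomorphic_derivI[OF assms(2,1,4)] by (auto intro!: derivative_eq_intros)
  then have "(w has_field_derivative exp (- v \<zeta>) * - deriv v \<zeta>) (at \<zeta>)"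
    by (rule has_field_derivative_transform_within_open[OF _ assms(1,4)]) (simp add: assms(3))
  then show ?thesis
    by (simp add: assms(3,4) mult.commute)
qed

section \<open>Orthonormal polynomials on the unit circle\<close>

text \<open>Here \<open>q, p, s\<close> stand for \<open>\<phi>\<^sub>m\<^sub>+\<^sub>1(\<zeta>), \<phi>\<^sub>m(\<zeta>), \<phi>\<^sub>m\<^sup>*(\<zeta>)\<close> at a point of the circle,
  \<open>u\<close> for \<open>conj \<zeta>\<^sup>m\<close>, \<open>k, k'\<close> for \<open>\<kappa>\<^sub>m, \<kappa>\<^sub>m\<^sub>+\<^sub>1\<close> and \<open>a\<close> for \<open>\<phi>\<^sub>m\<^sub>+\<^sub>1(0)\<close>.\<close>
lemma szego_recurrence_quadratic_identity:
  fixes \<zeta> \<zeta>_cnj u p p_cnj s s_cnj q q_cnj a a_cnj c k k' :: complex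
  assumes "\<zeta> * \<zeta>_cnj = 1" and "c * a = k'" and "k \<noteq> 0"
    and "k * q = k' * \<zeta> * p + a * s" and "k * q_cnj = k' * \<zeta>_cnj * p_cnj + a_cnj * s_cnj"
    and "p_cnj = u * s" and "s_cnj = u * p" and "k'\<^sup>2 - a * a_cnj = k\<^sup>2"
  shows "q * q_cnj + p * p_cnj = c * u * (\<zeta>_cnj * q\<^sup>2 - \<zeta> * p\<^sup>2)"
  using assms by algebra

locale opuc =
  fixes w :: "complex \<Rightarrow> complex" and \<phi> :: "nat \<Rightarrow> complex poly"
  assumes continuous_w: "continuous_on (sphere 0 1) w"
    and w_real: "\<And>\<zeta>. \<zeta> \<in> sphere 0 1 \<Longrightarrow> w \<zeta> \<in> \<real>"
    and degree_phi [simp]: "\<And>k. degree (\<phi> k) = k"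
    and lead_coeff_phi: "\<And>k. lead_coeff (\<phi> k) \<in> \<real> \<and> Re (lead_coeff (\<phi> k)) > 0"
    and phi_orthonormal: "\<And>j k. contour_integral (circlepath 0 1)
        (\<lambda>\<zeta>. poly (\<phi> j) \<zeta> * cnj (poly (\<phi> k) \<zeta>) * w \<zeta> / (\<i> * \<zeta>)) = (if j = k then 1 else 0)"
begin

definition wintegral :: "(complex \<Rightarrow> complex) \<Rightarrow> complex" where
  "wintegral h = contour_integral (circlepath 0 1) (\<lambda>\<zeta>. h \<zeta> * w \<zeta> / (\<i> * \<zeta>))"

definition pinner :: "complex poly \<Rightarrow> complex poly \<Rightarrow> complex" where
  "pinner p q = wintegral (\<lambda>\<zeta>. poly p \<zeta> * cnj (poly q \<zeta>))"

abbreviation \<kappa> :: "nat \<Rightarrow> complex" where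
  "\<kappa> k \<equiv> coeff (\<phi> k) k"

lemma cnj_kappa [simp]: "cnj (\<kappa> k) = \<kappa> k"
  using lead_coeff_phi[of k] by (simp add: Reals_cnj_iff)

lemma kappa_nonzero [simp]: "\<kappa> k \<noteq> 0"
  using lead_coeff_phi[of k] by auto

lemma pinner_phi: "pinner (\<phi> j) (\<phi> k) = (if j = k then 1 else 0)"
  using phi_orthonormal[of j k] by (simp add: pinner_def wintegral_def)

lemma wintegral_integrable:
  "continuous_on (sphere 0 1) f \<Longrightarrow> (\<lambda>\<zeta>. f \<zeta> * w \<zeta> / (\<i> * \<zeta>)) contour_integrable_on circlepath 0 1"
  by (rule contour_integrable_continuous_circlepath) (auto intro!: continuous_intros continuous_w)

lemma wintegral_cong: "(\<And>\<zeta>. \<zeta> \<in> sphere 0 1 \<Longrightarrow> f \<zeta> = g \<zeta>) \<Longrightarrow> wintegral f = wintegral g"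
  unfolding wintegral_def by (rule contour_integral_eq) auto

lemma wintegral_add:
  "continuous_on (sphere 0 1) f \<Longrightarrow> continuous_on (sphere 0 1) g \<Longrightarrow>
    wintegral (\<lambda>\<zeta>. f \<zeta> + g \<zeta>) = wintegral f + wintegral g"
  unfolding wintegral_def
  by (subst contour_integral_add[symmetric]) (auto simp: wintegral_integrable add_divide_distrib distrib_right)

lemma wintegral_diff:
  "continuous_on (sphere 0 1) f \<Longrightarrow> continuous_on (sphere 0 1) g \<Longrightarrow>
    wintegral (\<lambda>\<zeta>. f \<zeta> - g \<zeta>) = wintegral f - wintegral g"
  unfolding wintegral_def
  by (subst contour_integral_diff[symmetric]) (auto simp: wintegral_integrable diff_divide_distrib left_diff_distrib)

lemma wintegral_cmult: "continuous_on (sphere 0 1) f \<Longrightarrow> wintegral (\<lambda>\<zeta>. c * f \<zeta>) = c * wintegral f"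
  unfolding wintegral_def
  by (subst contour_integral_lmul[symmetric]) (auto simp: wintegral_integrable mult.assoc)

text \<open>On the circle \<open>d\<zeta> / (\<i> \<zeta>) = d\<theta>\<close> is a real measure and \<open>w\<close> is real.\<close>
lemma wintegral_cnj: "wintegral (\<lambda>\<zeta>. cnj (f \<zeta>)) = cnj (wintegral f)"
proof -
  have "wintegral h = integral {0..1} (\<lambda>t. 2 * pi * (h (circlepath 0 1 t) * w (circlepath 0 1 t)))" for h
    unfolding wintegral_def contour_integral_integral
  proof (rule integral_cong)
    fix t :: real
    have "circlepath 0 1 t = exp (2 * of_real pi * \<i> * of_real t)"
      by (simp add: circlepath)
    then show "h (circlepath 0 1 t) * w (circlepath 0 1 t) / (\<i> * circlepath 0 1 t) *
          vector_derivative (circlepath 0 1) (at t) =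
          complex_of_real (2 * pi) * (h (circlepath 0 1 t) * w (circlepath 0 1 t))"
      by (simp add: vector_derivative_circlepath field_simps)
  qed
  moreover have "w (circlepath 0 1 t) \<in> \<real>" for t
    by (rule w_real) (simp add: circlepath norm_exp_eq_Re)
  ultimately show ?thesis
    by (simp add: integral_cnj Reals_cnj_iff)
qed

lemma pinner_add_left: "pinner (p + q) r = pinner p r + pinner q r"
  unfolding pinner_def
  by (subst wintegral_add[symmetric]) (auto intro!: continuous_intros wintegral_cong simp: algebra_simps)

lemma pinner_diff_left: "pinner (p - q) r = pinner p r - pinner q r"
  unfolding pinner_def
  by (subst wintegral_diff[symmetric]) (auto intro!: continuous_intros wintegral_cong simp: algebra_simps)

lemma pinner_smult_left: "pinner (smult c p) r = c * pinner p r"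
  unfolding pinner_def
  by (subst wintegral_cmult[symmetric]) (auto intro!: continuous_intros wintegral_cong simp: algebra_simps)

lemma pinner_add_right: "pinner r (p + q) = pinner r p + pinner r q"
  unfolding pinner_def
  by (subst wintegral_add[symmetric]) (auto intro!: continuous_intros wintegral_cong simp: algebra_simps)

lemma pinner_smult_right: "pinner r (smult c p) = cnj c * pinner r p"
  unfolding pinner_def
  by (subst wintegral_cmult[symmetric]) (auto intro!: continuous_intros wintegral_cong simp: algebra_simps)

lemma pinner_cnj_commute: "pinner q p = cnj (pinner p q)"
  unfolding pinner_def by (subst wintegral_cnj[symmetric]) (auto intro!: wintegral_cong simp: algebra_simps)

lemma pinner_zero_left [simp]: "pinner 0 q = 0"
  using pinner_smult_left[of 0 0 q] by simp

lemma pinner_sum_left: "pinner (\<Sum>j\<in>A. p j) q = (\<Sum>j\<in>A. pinner (p j) q)"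
  by (induction A rule: infinite_finite_induct) (simp_all add: pinner_add_left)

lemma phi_span:
  assumes "degree p \<le> k"
  shows "\<exists>c. p = (\<Sum>j\<le>k. smult (c j) (\<phi> j))"
  using assms
proof (induction k arbitrary: p)
  case 0
  then have "coeff p n = coeff (smult (coeff p 0 / \<kappa> 0) (\<phi> 0)) n" for n
    by (cases n) (simp_all add: coeff_eq_0)
  then have "p = smult (coeff p 0 / \<kappa> 0) (\<phi> 0)"
    by (rule poly_eqI)
  then show ?case by (intro exI[of _ "\<lambda>_. coeff p 0 / \<kappa> 0"]) simp
next
  case (Suc k)
  define c where "c = coeff p (Suc k) / \<kappa> (Suc k)"
  have "degree (p - smult c (\<phi> (Suc k))) \<le> k"
    by (rule degree_le_if_coeff_Suc_eq_0)
      (use Suc.prems in \<open>auto simp: c_def intro!: degree_diff_le order.trans[OF degree_smult_le]\<close>)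
  then obtain d where d: "p - smult c (\<phi> (Suc k)) = (\<Sum>j\<le>k. smult (d j) (\<phi> j))"
    using Suc.IH by blast
  have "(\<Sum>j\<le>k. smult ((d(Suc k := c)) j) (\<phi> j)) = (\<Sum>j\<le>k. smult (d j) (\<phi> j))"
    by (intro sum.cong) auto
  then have "p = (\<Sum>j\<le>Suc k. smult ((d(Suc k := c)) j) (\<phi> j))"
    using d by (simp add: algebra_simps)
  then show ?case by blast
qed

lemma pinner_sum_phi: "pinner (\<Sum>j\<le>k. smult (c j) (\<phi> j)) (\<phi> m) = (if m \<le> k then c m else 0)"
proof -
  have "pinner (\<Sum>j\<le>k. smult (c j) (\<phi> j)) (\<phi> m) = (\<Sum>j\<le>k. c j * (if j = m then 1 else 0))"
    by (simp add: pinner_sum_left pinner_smult_left pinner_phi)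
  also have "\<dots> = (\<Sum>j\<le>k. if j = m then c j else 0)"
    by (intro sum.cong) auto
  finally show ?thesis by simp
qed

lemma pinner_phi_eq_0:
  assumes "degree p < m"
  shows "pinner p (\<phi> m) = 0" and "pinner (\<phi> m) p = 0"
proof -
  obtain k where "degree p \<le> k" "k < m"
    using assms by blast
  then obtain c where "p = (\<Sum>j\<le>k. smult (c j) (\<phi> j))"
    using phi_span by blast
  with \<open>k < m\<close> show "pinner p (\<phi> m) = 0"
    by (simp add: pinner_sum_phi)
  then show "pinner (\<phi> m) p = 0"
    by (simp add: pinner_cnj_commute[of "\<phi> m" p])
qed

lemma pinner_phi_eq_coeff:
  assumes "degree p \<le> m"
  shows "pinner p (\<phi> m) = coeff p m / \<kappa> m" and "pinner (\<phi> m) p = cnj (coeff p m) / \<kappa> m"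
proof -
  obtain c where p: "p = (\<Sum>j\<le>m. smult (c j) (\<phi> j))"
    using phi_span assms by blast
  have "coeff p m = (\<Sum>j\<in>{m}. c j * coeff (\<phi> j) m)"
    unfolding p coeff_sum coeff_smult
    by (rule sum.mono_neutral_right) (auto simp: coeff_eq_0)
  moreover have "pinner p (\<phi> m) = c m"
    unfolding p by (simp add: pinner_sum_phi)
  ultimately show "pinner p (\<phi> m) = coeff p m / \<kappa> m"
    by simp
  then show "pinner (\<phi> m) p = cnj (coeff p m) / \<kappa> m"
    by (simp add: pinner_cnj_commute[of "\<phi> m" p])
qed

lemma orthogonal_phi_imp_zero:
  assumes "\<And>j. j \<le> degree s \<Longrightarrow> pinner s (\<phi> j) = 0"
  shows "s = 0"
proof -
  obtain c where s: "s = (\<Sum>j\<le>degree s. smult (c j) (\<phi> j))"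
    using phi_span by blast
  have "c j = 0" if "j \<le> degree s" for j
    using assms[OF that] that by (subst (asm) s) (simp add: pinner_sum_phi)
  then have "(\<Sum>j\<le>degree s. smult (c j) (\<phi> j)) = 0"
    by (intro sum.neutral) auto
  with s show ?thesis by simp
qed

lemma pinner_pCons_0: "pinner (pCons 0 p) (pCons 0 q) = pinner p q"
  unfolding pinner_def
  by (rule wintegral_cong) (auto simp: mult.left_commute[of "cnj _"] sphere_mult_cnj)

lemma pinner_poly_star_commute:
  "degree p \<le> m \<Longrightarrow> degree q \<le> m \<Longrightarrow> pinner (poly_star m p) q = pinner (poly_star m q) p"
  unfolding pinner_def by (rule wintegral_cong) (simp add: poly_star_on_circle)

lemma pinner_poly_star_phi:
  assumes "degree q \<le> m"
  shows "pinner q (poly_star m (\<phi> m)) = poly q 0 / \<kappa> m"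
proof -
  have "pinner q (poly_star m (\<phi> m)) = pinner (\<phi> m) (poly_star m q)"
    unfolding pinner_def using assms by (intro wintegral_cong) (simp add: cnj_poly_star_on_circle)
  also have "\<dots> = poly q 0 / \<kappa> m"
    by (simp add: pinner_phi_eq_coeff degree_poly_star_le coeff_poly_star poly_0_coeff_0)
  finally show ?thesis .
qed

lemma orthogonal_shifted_phi_imp_zero:
  assumes "degree r \<le> m" and "coeff r 0 = 0"
    and "\<And>j. j < m \<Longrightarrow> pinner r (pCons 0 (\<phi> j)) = 0"
  shows "r = 0"
proof -
  obtain s where s: "r = pCons 0 s"
    using assms(2) by (metis pCons_cases coeff_pCons_0)
  have "s = 0"
  proof (rule orthogonal_phi_imp_zero)
    fix j assume "j \<le> degree s"
    show "pinner s (\<phi> j) = 0"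
    proof (cases "s = 0")
      case False
      with assms(1) s \<open>j \<le> degree s\<close> have "j < m"
        by simp
      then show ?thesis
        using assms(3) by (simp add: s pinner_pCons_0)
    qed simp
  qed
  with s show ?thesis
    by simp
qed

lemma pinner_shift_phi_lower:
  assumes "j < m"
  shows "pinner (\<phi> (Suc m)) (pCons 0 (\<phi> j)) = 0"
    and "pinner (pCons 0 (\<phi> m)) (pCons 0 (\<phi> j)) = 0"
    and "pinner (poly_star m (\<phi> m)) (pCons 0 (\<phi> j)) = 0"
proof -
  have deg: "degree (pCons 0 (\<phi> j)) \<le> m"
    using degree_pCons_le[of 0 "\<phi> j"] assms by simp
  then show "pinner (\<phi> (Suc m)) (pCons 0 (\<phi> j)) = 0"
    by (simp add: pinner_phi_eq_0)
  show "pinner (pCons 0 (\<phi> m)) (pCons 0 (\<phi> j)) = 0"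
    using assms by (simp add: pinner_pCons_0 pinner_phi)
  have "pinner (poly_star m (\<phi> m)) (pCons 0 (\<phi> j)) = pinner (poly_star m (pCons 0 (\<phi> j))) (\<phi> m)"
    using deg by (simp add: pinner_poly_star_commute)
  also have "\<dots> = 0"
    using assms by (intro pinner_phi_eq_0 degree_poly_star_less) auto
  finally show "pinner (poly_star m (\<phi> m)) (pCons 0 (\<phi> j)) = 0" .
qed

theorem szego_recurrence:
  "smult (\<kappa> m) (\<phi> (Suc m)) =
    smult (\<kappa> (Suc m)) (pCons 0 (\<phi> m)) + smult (poly (\<phi> (Suc m)) 0) (poly_star m (\<phi> m))"
proof -
  define a where "a = poly (\<phi> (Suc m)) 0"
  define r where "r = smult (\<kappa> m) (\<phi> (Suc m)) - smult (\<kappa> (Suc m)) (pCons 0 (\<phi> m))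
    - smult a (poly_star m (\<phi> m))"
  have deg_r_Suc: "degree r \<le> Suc m"
    unfolding r_def using degree_pCons_le[of 0 "\<phi> m"] degree_poly_star_le[of m "\<phi> m"]
    by (intro degree_diff_le order.trans[OF degree_smult_le]) auto
  have "coeff (poly_star m (\<phi> m)) (Suc m) = 0"
    using degree_poly_star_le[of m "\<phi> m"] by (intro coeff_eq_0) simp
  then have "coeff r (Suc m) = 0"
    by (simp add: r_def)
  with deg_r_Suc have "degree r \<le> m"
    by (rule degree_le_if_coeff_Suc_eq_0)
  moreover have "coeff r 0 = 0"
    by (simp add: r_def a_def coeff_poly_star poly_0_coeff_0)
  moreover have "pinner r (pCons 0 (\<phi> j)) = 0" if "j < m" for j
  proof -
    have "pinner r (pCons 0 (\<phi> j)) = \<kappa> m * pinner (\<phi> (Suc m)) (pCons 0 (\<phi> j))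
        - \<kappa> (Suc m) * pinner (pCons 0 (\<phi> m)) (pCons 0 (\<phi> j))
        - a * pinner (poly_star m (\<phi> m)) (pCons 0 (\<phi> j))"
      unfolding r_def pinner_diff_left pinner_smult_left ..
    then show ?thesis
      using pinner_shift_phi_lower[OF that] by simp
  qed
  ultimately have "r = 0"
    by (rule orthogonal_shifted_phi_imp_zero)
  then show ?thesis
    by (simp add: r_def a_def diff_eq_eq)
qed

lemma pinner_poly_star_self: "pinner (poly_star m (\<phi> m)) (poly_star m (\<phi> m)) = 1"
  by (simp add: pinner_poly_star_phi degree_poly_star_le)

lemma pinner_shift_poly_star:
  "pinner (pCons 0 (\<phi> m)) (poly_star m (\<phi> m)) = - poly (\<phi> (Suc m)) 0 / \<kappa> (Suc m)"
proof -
  have "0 = pinner (smult (\<kappa> m) (\<phi> (Suc m))) (poly_star m (\<phi> m))"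
    by (simp add: pinner_smult_left pinner_phi_eq_0 degree_poly_star_le le_imp_less_Suc)
  also have "\<dots> = \<kappa> (Suc m) * pinner (pCons 0 (\<phi> m)) (poly_star m (\<phi> m)) + poly (\<phi> (Suc m)) 0"
    by (subst szego_recurrence)
      (simp add: pinner_add_left pinner_smult_left pinner_poly_star_self del: smult_pCons)
  finally show ?thesis
    by (simp add: field_simps eq_neg_iff_add_eq_0)
qed

lemma kappa_Suc_square:
  "\<kappa> (Suc m) ^ 2 - poly (\<phi> (Suc m)) 0 * cnj (poly (\<phi> (Suc m)) 0) = \<kappa> m ^ 2"
proof -
  define a where "a = poly (\<phi> (Suc m)) 0"
  define X where "X = pinner (pCons 0 (\<phi> m)) (poly_star m (\<phi> m))"
  have X: "X = - a / \<kappa> (Suc m)"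
    by (simp add: X_def a_def pinner_shift_poly_star)
  have "\<kappa> m ^ 2 = pinner (smult (\<kappa> m) (\<phi> (Suc m))) (smult (\<kappa> m) (\<phi> (Suc m)))"
    by (simp add: pinner_smult_left pinner_smult_right pinner_phi power2_eq_square)
  also have "\<dots> = \<kappa> (Suc m) ^ 2 + \<kappa> (Suc m) * cnj a * X + a * \<kappa> (Suc m) * cnj X + a * cnj a"
    unfolding szego_recurrence a_def[symmetric] X_def
    by (simp add: pinner_add_left pinner_add_right pinner_smult_left pinner_smult_right
        pinner_pCons_0 pinner_phi pinner_poly_star_self pinner_cnj_commute[of "poly_star m _"]
        power2_eq_square algebra_simps del: smult_pCons)
  finally show ?thesis
    by (simp add: X a_def[symmetric] field_simps power2_eq_square)
qed

lemma contour_integral_eq_wintegral: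
  "contour_integral (circlepath 0 1) (\<lambda>\<zeta>. f \<zeta> * w \<zeta>) = wintegral (\<lambda>\<zeta>. \<i> * \<zeta> * f \<zeta>)"
  unfolding wintegral_def by (rule contour_integral_eq) auto

lemma contour_integral_phi_square:
  "contour_integral (circlepath 0 1) (\<lambda>\<zeta>. poly (\<phi> m) \<zeta> ^ 2 / \<zeta> ^ m * w \<zeta>)
    = - \<i> * poly (\<phi> (Suc m)) 0 / \<kappa> (Suc m)"
proof -
  have "wintegral (\<lambda>\<zeta>. \<i> * \<zeta> * (poly (\<phi> m) \<zeta> ^ 2 / \<zeta> ^ m))
      = wintegral (\<lambda>\<zeta>. \<i> * (poly (pCons 0 (\<phi> m)) \<zeta> * cnj (poly (poly_star m (\<phi> m)) \<zeta>)))"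
    by (rule wintegral_cong) (simp add: cnj_poly_star_on_circle cnj_power_on_circle power2_eq_square)
  also have "\<dots> = \<i> * pinner (pCons 0 (\<phi> m)) (poly_star m (\<phi> m))"
    unfolding pinner_def by (rule wintegral_cmult) (intro continuous_intros)
  finally show ?thesis
    unfolding contour_integral_eq_wintegral pinner_shift_poly_star by simp
qed

lemma contour_integral_deriv_phi_square:
  "contour_integral (circlepath 0 1) (\<lambda>\<zeta>. (2 * poly (\<phi> m) \<zeta> * poly (pderiv (\<phi> m)) \<zeta> / \<zeta> ^ m
      - of_nat m * poly (\<phi> m) \<zeta> ^ 2 / \<zeta> ^ Suc m) * w \<zeta>)
    = - \<i> * of_nat m * poly (\<phi> m) 0 / \<kappa> m"
proof -
  let ?R = "poly_star m (\<phi> m)"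
  have "wintegral (\<lambda>\<zeta>. \<i> * \<zeta> * (2 * poly (\<phi> m) \<zeta> * poly (pderiv (\<phi> m)) \<zeta> / \<zeta> ^ m
      - of_nat m * poly (\<phi> m) \<zeta> ^ 2 / \<zeta> ^ Suc m))
    = wintegral (\<lambda>\<zeta>. \<i> * (2 * (poly (pCons 0 (pderiv (\<phi> m))) \<zeta> * cnj (poly ?R \<zeta>))
      - of_nat m * (poly (\<phi> m) \<zeta> * cnj (poly ?R \<zeta>))))"
    by (rule wintegral_cong)
      (auto simp: cnj_poly_star_on_circle cnj_power_on_circle power2_eq_square field_simps)
  also have "\<dots> = \<i> * (2 * pinner (pCons 0 (pderiv (\<phi> m))) ?R - of_nat m * pinner (\<phi> m) ?R)"
    unfolding pinner_def
    by (subst wintegral_cmult wintegral_diff, (intro continuous_intros)+)+ (rule refl)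
  also have "\<dots> = - \<i> * of_nat m * poly (\<phi> m) 0 / \<kappa> m"
  proof -
    have "degree (pCons 0 (pderiv (\<phi> m))) \<le> m"
      using degree_pCons_le[of 0 "pderiv (\<phi> m)"]
      by (cases "pderiv (\<phi> m) = 0") (auto simp: degree_pderiv pderiv_eq_0_iff)
    then show ?thesis
      by (simp add: pinner_poly_star_phi)
  qed
  finally show ?thesis
    unfolding contour_integral_eq_wintegral .
qed

lemma contour_integral_logderiv_phi_square:
  fixes dv :: "complex \<Rightarrow> complex"
  assumes w_deriv: "\<And>\<zeta>. \<zeta> \<in> sphere 0 1 \<Longrightarrow> (w has_field_derivative - dv \<zeta> * w \<zeta>) (at \<zeta>)"
  shows "contour_integral (circlepath 0 1) (\<lambda>\<zeta>. dv \<zeta> * (poly (\<phi> m) \<zeta> ^ 2 / \<zeta> ^ m) * w \<zeta>)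
    = - \<i> * of_nat m * poly (\<phi> m) 0 / \<kappa> m"
proof -
  define P' where "P' \<zeta> = 2 * poly (\<phi> m) \<zeta> * poly (pderiv (\<phi> m)) \<zeta> / \<zeta> ^ m
      - of_nat m * poly (\<phi> m) \<zeta> ^ 2 / \<zeta> ^ Suc m" for \<zeta>
  have "((\<lambda>\<zeta>. poly (\<phi> m) \<zeta> ^ 2 / \<zeta> ^ m) has_field_derivative P' \<zeta>) (at \<zeta>)"
    if "\<zeta> \<in> sphere 0 1" for \<zeta>
  proof -
    have "\<zeta> \<noteq> 0" using that by auto
    show ?thesis
      unfolding P'_def
      by (rule derivative_eq_intros poly_DERIV refl | simp add: \<open>\<zeta> \<noteq> 0\<close>)+
        (cases m, simp_all add: \<open>\<zeta> \<noteq> 0\<close> field_simps power2_eq_square)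
  qed
  then have by_parts:
    "contour_integral (circlepath 0 1) (\<lambda>\<zeta>. poly (\<phi> m) \<zeta> ^ 2 / \<zeta> ^ m * (- dv \<zeta> * w \<zeta>))
      = - contour_integral (circlepath 0 1) (\<lambda>\<zeta>. P' \<zeta> * w \<zeta>)"
    using w_deriv
    by (intro contour_integral_by_parts_closed_path contour_integrable_continuous_circlepath)
      (auto simp: P'_def intro!: continuous_intros continuous_w)
  have "(\<lambda>\<zeta>. poly (\<phi> m) \<zeta> ^ 2 / \<zeta> ^ m * (- dv \<zeta> * w \<zeta>))
      = (\<lambda>\<zeta>. - (dv \<zeta> * (poly (\<phi> m) \<zeta> ^ 2 / \<zeta> ^ m) * w \<zeta>))"
    by (simp add: fun_eq_iff)
  with by_parts have "contour_integral (circlepath 0 1) (\<lambda>\<zeta>. dv \<zeta> * (poly (\<phi> m) \<zeta> ^ 2 / \<zeta> ^ m) * w \<zeta>)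
      = contour_integral (circlepath 0 1) (\<lambda>\<zeta>. P' \<zeta> * w \<zeta>)"
    by (simp only: contour_integral_neg neg_equal_iff_equal)
  then show ?thesis
    unfolding P'_def contour_integral_deriv_phi_square .
qed

section \<open>The integrals \<open>A\<^sub>k\<close> and \<open>B\<^sub>k\<close>\<close>

definition B_integrand :: "nat \<Rightarrow> complex \<Rightarrow> complex" where
  "B_integrand k \<zeta> = poly (\<phi> k) \<zeta> *
     (cnj (poly (\<phi> k) \<zeta>) - \<kappa> k / poly (\<phi> k) 0 * cnj (opuc_star (\<phi> k) \<zeta>))"

definition A_integrand :: "nat \<Rightarrow> complex \<Rightarrow> complex" where
  "A_integrand k \<zeta> = poly (\<phi> k) \<zeta> * cnj (opuc_star (\<phi> k) \<zeta>)"

definition kernel_integral :: "(complex \<Rightarrow> complex) \<Rightarrow> complex \<Rightarrow> (complex \<Rightarrow> complex) \<Rightarrow> complex" where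
  "kernel_integral dv z g = contour_integral (circlepath 0 1) (\<lambda>\<zeta>. (dv z - dv \<zeta>) / (z - \<zeta>) * g \<zeta> * w \<zeta>)"

lemma B_fun_eq_kernel_integral: "k \<noteq> 0 \<Longrightarrow> B_fun w dv \<phi> k z = - \<i> * kernel_integral dv z (B_integrand k)"
  by (simp add: B_fun_def kernel_integral_def B_integrand_def mult.assoc)

lemma A_fun_eq_kernel_integral:
  "k \<noteq> 0 \<Longrightarrow> A_fun w dv \<phi> k z = of_nat k * \<kappa> (k - 1) / \<kappa> k
     + \<i> * \<kappa> (k - 1) / poly (\<phi> k) 0 * z * kernel_integral dv z (A_integrand k)"
  by (simp add: A_fun_def kernel_integral_def A_integrand_def mult.assoc)

lemma B_integrands_identity:
  assumes \<zeta>: "\<zeta> \<in> sphere 0 1" and a: "poly (\<phi> (Suc m)) 0 \<noteq> 0"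
  defines "c \<equiv> \<kappa> (Suc m) / poly (\<phi> (Suc m)) 0"
  shows "B_integrand (Suc m) \<zeta> + B_integrand m \<zeta> + (\<kappa> m / poly (\<phi> m) 0 + c * z) * A_integrand m \<zeta>
     = c * (z - \<zeta>) * (poly (\<phi> m) \<zeta> ^ 2 / \<zeta> ^ m)"
proof -
  define p where "p = poly (\<phi> m) \<zeta>"
  define q where "q = poly (\<phi> (Suc m)) \<zeta>"
  define s where "s = poly (poly_star m (\<phi> m)) \<zeta>"
  define u where "u = cnj \<zeta> ^ m"
  have recurrence: "\<kappa> m * q = \<kappa> (Suc m) * \<zeta> * p + poly (\<phi> (Suc m)) 0 * s"
    using arg_cong[OF szego_recurrence, of "\<lambda>r. poly r \<zeta>"]
    by (simp add: p_def q_def s_def algebra_simps)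
  have star_Suc: "cnj (opuc_star (\<phi> (Suc m)) \<zeta>) = cnj \<zeta> * u * q"
    using \<zeta> by (simp add: opuc_star_eq_poly_star cnj_poly_star_on_circle u_def q_def)
  have star: "cnj (opuc_star (\<phi> m) \<zeta>) = cnj s"
    by (simp add: opuc_star_eq_poly_star s_def)
  have conj_star: "cnj s = u * p" "cnj p = u * s"
    using \<zeta> sphere_power_mult_cnj[OF \<zeta>, of m]
    by (simp_all add: cnj_poly_star_on_circle poly_star_on_circle u_def p_def s_def mult.commute)
  have "\<kappa> m * cnj q = \<kappa> (Suc m) * cnj \<zeta> * cnj p + cnj (poly (\<phi> (Suc m)) 0) * cnj s"
    using arg_cong[OF recurrence, of cnj] by simp
  with \<zeta> a recurrence conj_star kappa_Suc_square[of m]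
  have "q * cnj q + p * cnj p = c * u * (cnj \<zeta> * q\<^sup>2 - \<zeta> * p\<^sup>2)"
    by (intro szego_recurrence_quadratic_identity[where s = s and s_cnj = "cnj s"])
      (simp_all add: c_def sphere_mult_cnj)
  moreover have "p\<^sup>2 / \<zeta> ^ m = u * p\<^sup>2"
    using \<zeta> by (simp add: u_def cnj_power_on_circle)
  ultimately show ?thesis
    unfolding B_integrand_def A_integrand_def c_def[symmetric]
      star_Suc star conj_star(1) p_def[symmetric] q_def[symmetric]
    by algebra
qed

lemma contour_integral_kernel_phi_square:
  fixes dv :: "complex \<Rightarrow> complex"
  assumes dv: "continuous_on (sphere 0 1) dv"
    and w_deriv: "\<And>\<zeta>. \<zeta> \<in> sphere 0 1 \<Longrightarrow> (w has_field_derivative - dv \<zeta> * w \<zeta>) (at \<zeta>)"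
  shows "contour_integral (circlepath 0 1) (\<lambda>\<zeta>. (dv z - dv \<zeta>) * (poly (\<phi> m) \<zeta> ^ 2 / \<zeta> ^ m) * w \<zeta>)
    = \<i> * of_nat m * poly (\<phi> m) 0 / \<kappa> m - \<i> * dv z * poly (\<phi> (Suc m)) 0 / \<kappa> (Suc m)"
proof -
  define P where "P \<zeta> = poly (\<phi> m) \<zeta> ^ 2 / \<zeta> ^ m" for \<zeta>
  have "(\<lambda>\<zeta>. P \<zeta> * w \<zeta>) contour_integrable_on circlepath 0 1"
    "(\<lambda>\<zeta>. dv \<zeta> * P \<zeta> * w \<zeta>) contour_integrable_on circlepath 0 1"
    by (auto simp: P_def intro!: contour_integrable_continuous_circlepath continuous_intros
        dv continuous_w)
  then have "contour_integral (circlepath 0 1) (\<lambda>\<zeta>. (dv z - dv \<zeta>) * P \<zeta> * w \<zeta>)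
    = dv z * contour_integral (circlepath 0 1) (\<lambda>\<zeta>. P \<zeta> * w \<zeta>)
      - contour_integral (circlepath 0 1) (\<lambda>\<zeta>. dv \<zeta> * P \<zeta> * w \<zeta>)"
    by (simp add: left_diff_distrib mult.assoc contour_integral_diff contour_integral_lmul
        contour_integrable_lmul)
  then show ?thesis
    using contour_integral_phi_square[of m] contour_integral_logderiv_phi_square[OF w_deriv, of m]
    by (simp add: P_def mult.assoc)
qed

lemma kernel_integral_combination:
  fixes dv :: "complex \<Rightarrow> complex"
  assumes a: "poly (\<phi> (Suc m)) 0 \<noteq> 0" and b: "poly (\<phi> m) 0 \<noteq> 0" and z: "z \<notin> sphere 0 1"
    and dv: "continuous_on (sphere 0 1) dv"
    and w_deriv: "\<And>\<zeta>. \<zeta> \<in> sphere 0 1 \<Longrightarrow> (w has_field_derivative - dv \<zeta> * w \<zeta>) (at \<zeta>)"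
  defines "c \<equiv> \<kappa> (Suc m) / poly (\<phi> (Suc m)) 0"
  shows "kernel_integral dv z (B_integrand (Suc m)) + kernel_integral dv z (B_integrand m)
       + (\<kappa> m / poly (\<phi> m) 0 + c * z) * kernel_integral dv z (A_integrand m)
     = c * (\<i> * of_nat m * poly (\<phi> m) 0 / \<kappa> m - \<i> * dv z * poly (\<phi> (Suc m)) 0 / \<kappa> (Suc m))"
proof -
  define d where "d = \<kappa> m / poly (\<phi> m) 0 + c * z"
  define K where "K \<zeta> = (dv z - dv \<zeta>) / (z - \<zeta>)" for \<zeta>
  have z_circle: "z - \<zeta> \<noteq> 0" if "\<zeta> \<in> sphere 0 1" for \<zeta>
    using z that by auto
  have "(\<lambda>\<zeta>. K \<zeta> * g k \<zeta> * w \<zeta>) contour_integrable_on circlepath 0 1"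
    if "g = B_integrand \<or> g = A_integrand" and "poly (\<phi> k) 0 \<noteq> 0" for g k
    using that unfolding K_def B_integrand_def A_integrand_def opuc_star_eq_poly_star
    by (auto intro!: contour_integrable_continuous_circlepath continuous_intros dv continuous_w
        z_circle)
  then have "kernel_integral dv z (B_integrand (Suc m)) + kernel_integral dv z (B_integrand m)
       + d * kernel_integral dv z (A_integrand m)
     = contour_integral (circlepath 0 1) (\<lambda>\<zeta>. K \<zeta> * B_integrand (Suc m) \<zeta> * w \<zeta>
        + K \<zeta> * B_integrand m \<zeta> * w \<zeta> + d * (K \<zeta> * A_integrand m \<zeta> * w \<zeta>))"
    unfolding kernel_integral_def K_def[symmetric] using a b
    by (simp add: contour_integral_add contour_integral_lmul contour_integrable_add
        contour_integrable_lmul)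
  also have "\<dots> = contour_integral (circlepath 0 1)
      (\<lambda>\<zeta>. c * ((dv z - dv \<zeta>) * (poly (\<phi> m) \<zeta> ^ 2 / \<zeta> ^ m) * w \<zeta>))"
  proof (rule contour_integral_eq)
    fix \<zeta> assume "\<zeta> \<in> path_image (circlepath 0 1)"
    then have \<zeta>: "\<zeta> \<in> sphere 0 1" by simp
    have "K \<zeta> * B_integrand (Suc m) \<zeta> * w \<zeta> + K \<zeta> * B_integrand m \<zeta> * w \<zeta> + d * (K \<zeta> * A_integrand m \<zeta> * w \<zeta>)
        = K \<zeta> * (B_integrand (Suc m) \<zeta> + B_integrand m \<zeta> + d * A_integrand m \<zeta>) * w \<zeta>"
      by (simp add: algebra_simps)
    also have "\<dots> = c * (K \<zeta> * (z - \<zeta>)) * (poly (\<phi> m) \<zeta> ^ 2 / \<zeta> ^ m) * w \<zeta>"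
      unfolding d_def B_integrands_identity[OF \<zeta> a, folded c_def] by (simp add: mult_ac)
    also have "K \<zeta> * (z - \<zeta>) = dv z - dv \<zeta>"
      using z_circle[OF \<zeta>] by (simp add: K_def)
    finally show "K \<zeta> * B_integrand (Suc m) \<zeta> * w \<zeta> + K \<zeta> * B_integrand m \<zeta> * w \<zeta>
        + d * (K \<zeta> * A_integrand m \<zeta> * w \<zeta>) = c * ((dv z - dv \<zeta>) * (poly (\<phi> m) \<zeta> ^ 2 / \<zeta> ^ m) * w \<zeta>)"
      by (simp add: mult_ac)
  qed
  also have "\<dots> = c * contour_integral (circlepath 0 1)
      (\<lambda>\<zeta>. (dv z - dv \<zeta>) * (poly (\<phi> m) \<zeta> ^ 2 / \<zeta> ^ m) * w \<zeta>)"
    by (rule contour_integral_lmul)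
      (auto intro!: contour_integrable_continuous_circlepath continuous_intros dv continuous_w)
  also have "\<dots> = c * (\<i> * of_nat m * poly (\<phi> m) 0 / \<kappa> m - \<i> * dv z * poly (\<phi> (Suc m)) 0 / \<kappa> (Suc m))"
    by (simp only: contour_integral_kernel_phi_square[OF dv w_deriv])
  finally show ?thesis
    unfolding d_def .
qed

lemma B_A_relation:
  fixes dv :: "complex \<Rightarrow> complex"
  assumes m: "0 < m" and a: "poly (\<phi> (Suc m)) 0 \<noteq> 0" and b: "poly (\<phi> m) 0 \<noteq> 0"
    and z: "z \<noteq> 0" "z \<notin> sphere 0 1"
    and dv: "continuous_on (sphere 0 1) dv"
    and w_deriv: "\<And>\<zeta>. \<zeta> \<in> sphere 0 1 \<Longrightarrow> (w has_field_derivative - dv \<zeta> * w \<zeta>) (at \<zeta>)"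
  shows "B_fun w dv \<phi> (Suc m) z + B_fun w dv \<phi> m z
         - \<kappa> m / \<kappa> (m - 1) * A_fun w dv \<phi> m z / z
         - \<kappa> (Suc m) / \<kappa> (m - 1) * poly (\<phi> m) 0 / poly (\<phi> (Suc m)) 0 * A_fun w dv \<phi> m z
       = - of_nat m / z - dv z"
proof -
  define c where "c = \<kappa> (Suc m) / poly (\<phi> (Suc m)) 0"
  from kernel_integral_combination[OF a b z(2) dv w_deriv, folded c_def]
  have KI: "kernel_integral dv z (B_integrand (Suc m))
      = c * (\<i> * of_nat m * poly (\<phi> m) 0 / \<kappa> m - \<i> * dv z * poly (\<phi> (Suc m)) 0 / \<kappa> (Suc m))
        - kernel_integral dv z (B_integrand m)
        - (\<kappa> m / poly (\<phi> m) 0 + c * z) * kernel_integral dv z (A_integrand m)"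
    by (simp add: algebra_simps)
  have "m \<noteq> 0"
    using m by simp
  show ?thesis
    unfolding B_fun_eq_kernel_integral[OF Suc_not_Zero] B_fun_eq_kernel_integral[OF \<open>m \<noteq> 0\<close>]
      A_fun_eq_kernel_integral[OF \<open>m \<noteq> 0\<close>] KI
    using a b z(1) by (simp add: c_def field_simps)
qed

end

theorem theorem3p1:
  fixes w v :: "complex \<Rightarrow> complex" and S :: "complex set"
    and \<phi> :: "nat \<Rightarrow> complex poly" and n :: nat and z :: complex
  assumes S_open: "open S" and S_circ: "sphere 0 1 \<subseteq> S"
    and v_hol: "v holomorphic_on S"
    and w_exp: "\<And>\<zeta>. \<zeta> \<in> S \<Longrightarrow> w \<zeta> = exp (- v \<zeta>)"
    and w_pos: "\<And>\<zeta>. \<zeta> \<in> sphere 0 1 \<Longrightarrow> w \<zeta> \<in> \<real> \<and> Re (w \<zeta>) > 0"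
    and w_norm: "contour_integral (circlepath 0 1) (\<lambda>\<zeta>. w \<zeta> / (\<i> * \<zeta>)) = 1"
    and moments: "\<And>m::int. (\<lambda>\<zeta>. \<zeta> powi m * w \<zeta> / (\<i> * \<zeta>)) contour_integrable_on circlepath 0 1"
    and kernel_int: "\<And>(m::int) x. x \<in> ball 0 1 \<Longrightarrow> v analytic_on {x} \<Longrightarrow>
        (\<lambda>\<zeta>. (deriv v x - deriv v \<zeta>) / (x - \<zeta>) * \<zeta> powi m * w \<zeta> / (\<i> * \<zeta>))
          contour_integrable_on circlepath 0 1"
    and v_mero: "v meromorphic_on ball 0 1"
    and phi_deg: "\<And>k. degree (\<phi> k) = k"
    and phi_lead: "\<And>k. lead_coeff (\<phi> k) \<in> \<real> \<and> Re (lead_coeff (\<phi> k)) > 0"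
    and phi_orth: "\<And>j k. contour_integral (circlepath 0 1)
        (\<lambda>\<zeta>. poly (\<phi> j) \<zeta> * cnj (poly (\<phi> k) \<zeta>) * w \<zeta> / (\<i> * \<zeta>)) = (if j = k then 1 else 0)"
    and n_ge: "n \<ge> 2"
    and phin0: "poly (\<phi> n) 0 \<noteq> 0" and phin10: "poly (\<phi> (n - 1)) 0 \<noteq> 0"
    and z_in: "z \<in> ball 0 1" and z_nz: "z \<noteq> 0" and z_reg: "v analytic_on {z}"
  shows "B_fun w (deriv v) \<phi> n z + B_fun w (deriv v) \<phi> (n - 1) z
         - kap \<phi> (n - 1) / kap \<phi> (n - 2) * A_fun w (deriv v) \<phi> (n - 1) z / z
         - kap \<phi> n / kap \<phi> (n - 2) * poly (\<phi> (n - 1)) 0 / poly (\<phi> n) 0 * A_fun w (deriv v) \<phi> (n - 1) z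
       = - (of_nat n - 1) / z - deriv v z"
proof -
  have w_deriv: "(w has_field_derivative - deriv v \<zeta> * w \<zeta>) (at \<zeta>)" if "\<zeta> \<in> sphere 0 1" for \<zeta>
    using has_field_derivative_exp_neg[OF S_open v_hol w_exp] S_circ that by blast
  interpret opuc w \<phi>
  proof
    show "continuous_on (sphere 0 1) w"
      using w_deriv by (intro continuous_at_imp_continuous_on ballI DERIV_isCont)
  qed (use w_pos phi_deg phi_lead phi_orth in auto)
  obtain m where n: "n = Suc m" and m: "0 < m"
    using n_ge by (cases n) auto
  have "continuous_on (sphere 0 1) (deriv v)"
    using holomorphic_on_imp_continuous_on[OF holomorphic_deriv[OF v_hol S_open]] S_circ
    by (rule continuous_on_subset)
  from B_A_relation[OF m _ _ z_nz _ this w_deriv] phin0 phin10 z_in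
  show ?thesis
    by (simp add: n numeral_2_eq_2)
qed

end
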